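(* Let $G$ be a finite group with $c(G)$ conjugacy classes, and let $\pi\in S_4$ be a non-identity permutation with $\pi(1)=1$ or $\pi(4)=4$. Then $Pr_\pi(G)=\frac{c(G)}{|G|}$.
   Context: For $\pi\in S_n$ written in one-line notation $\langle\pi_1\dots\pi_n\rangle$, $Pr_\pi(G)$ is the probability that $a_1a_2\cdots a_n=a_{\pi_1}a_{\pi_2}\cdots a_{\pi_n}$ when $a_1,\dots,a_n$ are independent uniformly random elements of the finite group $G$. $c(G)$ is the number of conjugacy classes of $G$. *)

theory Defs
  imports "HOL-Algebra.Algebra" "HOL-Combinatorics.Permutations" "HOL-Library.FuncSet"
begin

fun word_prod :: "('g, 'b) monoid_scheme \<Rightarrow> (nat \<Rightarrow> 'g) \<Rightarrow> nat list \<Rightarrow> 'g" where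
  "word_prod G a [] = \<one>\<^bsub>G\<^esub>"
| "word_prod G a (i # is) = a i \<otimes>\<^bsub>G\<^esub> word_prod G a is"

(* Pr_pi(G): probability that a_1...a_n = a_{pi 1} ... a_{pi n} for independent
   uniform a_1,...,a_n in G; computed as (number of solutions) / |G|^n *)
definition Pr_perm :: "('g, 'b) monoid_scheme \<Rightarrow> nat \<Rightarrow> (nat \<Rightarrow> nat) \<Rightarrow> real" where
  "Pr_perm G n \<pi> =
     real (card {a \<in> {1..n} \<rightarrow>\<^sub>E carrier G.
                   word_prod G a [1..<n+1] = word_prod G a (map \<pi> [1..<n+1])})
     / real (order G) ^ n"

definition conj_classes :: "('g, 'b) monoid_scheme \<Rightarrow> 'g set set" where
  "conj_classes G = {{g \<otimes>\<^bsub>G\<^esub> x \<otimes>\<^bsub>G\<^esub> inv\<^bsub>G\<^esub> g | g. g \<in> carrier G} | x. x \<in> carrier G}"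

end

theory Submission
  imports Defs
begin

text \<open>
  By Burnside's lemma for the conjugation action, \<open>G\<close> has \<open>c(G) |G|\<close> commuting pairs.
  If \<open>\<pi>\<close> fixes 1 or 4, the common outer letter cancels from both words, leaving an
  equation \<open>a1 a2 a3 = a(\<sigma> 1) a(\<sigma> 2) a(\<sigma> 3)\<close> with \<open>\<sigma> \<noteq> id\<close>. After an invertible change
  of variables each of the five such equations says that two independent elements commute;
  e.g. \<open>xyz = zyx\<close> iff \<open>xy\<close> commutes with \<open>z x\<^sup>-\<^sup>1\<close>. So \<open>c(G) |G|\<^sup>3\<close> of the \<open>|G|\<^sup>4\<close>
  quadruples are solutions.
\<close>

definition word_solutions :: "('g, 'b) monoid_scheme \<Rightarrow> nat set \<Rightarrow> nat list \<Rightarrow> nat list \<Rightarrow> (nat \<Rightarrow> 'g) set" where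
  "word_solutions G I xs ys = {a \<in> I \<rightarrow>\<^sub>E carrier G. word_prod G a xs = word_prod G a ys}"

lemma Pr_perm_eq_card_word_solutions:
  "Pr_perm G n \<pi> = real (card (word_solutions G {1..n} [1..<n+1] (map \<pi> [1..<n+1]))) / real (order G) ^ n"
  by (simp add: Pr_perm_def word_solutions_def)

lemma word_prod_cong: "(\<And>i. i \<in> set xs \<Longrightarrow> a i = b i) \<Longrightarrow> word_prod G a xs = word_prod G b xs"
  by (induction xs) auto

lemma word_prod_restrict: "set xs \<subseteq> I \<Longrightarrow> word_prod G (restrict a I) xs = word_prod G a xs"
  by (rule word_prod_cong) auto

lemma (in monoid) word_prod_closed:
  "(\<And>i. i \<in> set xs \<Longrightarrow> a i \<in> carrier G) \<Longrightarrow> word_prod G a xs \<in> carrier G"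
  by (induction xs) auto

lemma (in monoid) word_prod_append:
  assumes "\<And>i. i \<in> set (xs @ ys) \<Longrightarrow> a i \<in> carrier G"
  shows "word_prod G a (xs @ ys) = word_prod G a xs \<otimes> word_prod G a ys"
  using assms by (induction xs) (auto simp: m_assoc word_prod_closed)

lemma card_PiE_insert_filter:
  assumes "i \<notin> I" and "\<And>a. a \<in> insert i I \<rightarrow>\<^sub>E A \<Longrightarrow> P a \<longleftrightarrow> Q (restrict a I)"
  shows "card {a \<in> insert i I \<rightarrow>\<^sub>E A. P a} = card A * card {b \<in> I \<rightarrow>\<^sub>E A. Q b}"
proof -
  let ?ext = "\<lambda>(y, b). b(i := y)"
  have restrict_upd: "restrict (b(i := y)) I = b" if "b \<in> I \<rightarrow>\<^sub>E A" for b y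
    using that assms(1) by (auto simp: PiE_def extensional_def restrict_def)
  have "{a \<in> insert i I \<rightarrow>\<^sub>E A. P a} = ?ext ` (A \<times> {b \<in> I \<rightarrow>\<^sub>E A. Q b})"
  proof (intro equalityI subsetI)
    fix a assume "a \<in> {a \<in> insert i I \<rightarrow>\<^sub>E A. P a}"
    then obtain y b where "y \<in> A" "b \<in> I \<rightarrow>\<^sub>E A" "a = b(i := y)" "P a"
      by (auto simp: PiE_insert_eq)
    moreover have "a \<in> insert i I \<rightarrow>\<^sub>E A"
      using \<open>a \<in> {a \<in> insert i I \<rightarrow>\<^sub>E A. P a}\<close> by simp
    ultimately have "Q b"
      using assms(2) restrict_upd by metis
    then show "a \<in> ?ext ` (A \<times> {b \<in> I \<rightarrow>\<^sub>E A. Q b})"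
      using \<open>y \<in> A\<close> \<open>b \<in> I \<rightarrow>\<^sub>E A\<close> \<open>a = b(i := y)\<close> by auto
  next
    fix a assume "a \<in> ?ext ` (A \<times> {b \<in> I \<rightarrow>\<^sub>E A. Q b})"
    then obtain y b where "y \<in> A" "b \<in> I \<rightarrow>\<^sub>E A" "a = b(i := y)" "Q b"
      by auto
    moreover from this have "a \<in> insert i I \<rightarrow>\<^sub>E A"
      by (auto simp: PiE_insert_eq)
    ultimately show "a \<in> {a \<in> insert i I \<rightarrow>\<^sub>E A. P a}"
      using assms(2) restrict_upd by auto
  qed
  moreover have "inj_on ?ext (A \<times> {b \<in> I \<rightarrow>\<^sub>E A. Q b})"
    using inj_combinator[OF assms(1), of "\<lambda>_. A"] by (rule inj_on_subset) auto
  ultimately show ?thesis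
    by (simp add: card_image card_cartesian_product)
qed

lemma card_PiE_triple:
  assumes "distinct [i, j, k]"
  shows "card {a \<in> {i, j, k} \<rightarrow>\<^sub>E A. P a} =
    card {(x, y, z) \<in> A \<times> A \<times> A. P (restrict (\<lambda>n. if n = i then x else if n = j then y else z) {i, j, k})}"
proof (rule bij_betw_same_card)
  let ?a = "\<lambda>(x, y, z). restrict (\<lambda>n. if n = i then x else if n = j then y else z) {i, j, k}"
  have "?a (a i, a j, a k) = a" if "a \<in> {i, j, k} \<rightarrow>\<^sub>E A" for a
    using that by (auto simp: PiE_def extensional_def fun_eq_iff)
  then show "bij_betw (\<lambda>a. (a i, a j, a k)) {a \<in> {i, j, k} \<rightarrow>\<^sub>E A. P a}
      {(x, y, z) \<in> A \<times> A \<times> A. P (restrict (\<lambda>n. if n = i then x else if n = j then y else z) {i, j, k})}"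
    by (intro bij_betw_byWitness[where f' = ?a]) (use assms in \<open>auto simp: PiE_iff\<close>)
qed

lemma permutes_fixing_point_rearranges:
  assumes "\<pi> permutes insert m {i, j, k}" "\<pi> m = m" "distinct [m, i, j, k]" "\<pi> \<noteq> id"
  shows "distinct (map \<pi> [i, j, k])" "set (map \<pi> [i, j, k]) = {i, j, k}" "map \<pi> [i, j, k] \<noteq> [i, j, k]"
proof -
  have inj: "inj \<pi>"
    using assms(1) by (rule permutes_inj)
  then show "distinct (map \<pi> [i, j, k])"
    using assms(3) by (simp add: inj_eq)
  have "\<pi> ` (insert m {i, j, k} - {m}) = \<pi> ` insert m {i, j, k} - \<pi> ` {m}"
    by (rule image_set_diff[OF inj])
  also have "\<dots> = insert m {i, j, k} - {m}"
    by (metis permutes_image[OF assms(1)] assms(2) image_empty image_insert)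
  moreover have "insert m {i, j, k} - {m} = {i, j, k}"
    using assms(3) by auto
  ultimately show "set (map \<pi> [i, j, k]) = {i, j, k}"
    by simp
  show "map \<pi> [i, j, k] \<noteq> [i, j, k]"
  proof
    assume "map \<pi> [i, j, k] = [i, j, k]"
    then have "\<pi> n = n" for n
      using assms(1,2) by (cases "n \<in> insert m {i, j, k}") (auto simp: permutes_not_in)
    then show False
      using assms(4) by auto
  qed
qed

definition commuting_pairs :: "('g, 'b) monoid_scheme \<Rightarrow> ('g \<times> 'g) set" where
  "commuting_pairs G = {(x, y) \<in> carrier G \<times> carrier G. x \<otimes>\<^bsub>G\<^esub> y = y \<otimes>\<^bsub>G\<^esub> x}"

context group begin

lemma mult_r_inv_cancel: "a \<in> carrier G \<Longrightarrow> x \<in> carrier G \<Longrightarrow> a \<otimes> x \<otimes> inv x = a"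
  by (simp add: m_assoc)

lemma mult_l_inv_cancel: "a \<in> carrier G \<Longrightarrow> x \<in> carrier G \<Longrightarrow> a \<otimes> inv x \<otimes> x = a"
  by (simp add: m_assoc)

lemma card_commuting_pairs:
  assumes "finite (carrier G)"
  shows "card (commuting_pairs G) = card (conj_classes G) * order G"
proof -
  let ?conj = "\<lambda>g. \<lambda>h \<in> carrier G. g \<otimes> h \<otimes> inv g"
  interpret conjugation: group_action G "carrier G" ?conj
    by (rule action_by_conjugation)
  have "orbits G (carrier G) ?conj = conj_classes G"
    unfolding orbits_def orbit_def conj_classes_def by auto
  moreover have "invariants (carrier G) ?conj g = {x \<in> carrier G. g \<otimes> x = x \<otimes> g}"
    if "g \<in> carrier G" for g
    using that by (auto simp: invariants_def inv_solve_right')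
  ultimately have "card (conj_classes G) * order G = (\<Sum>g \<in> carrier G. card {x \<in> carrier G. g \<otimes> x = x \<otimes> g})"
    using conjugation.burnside assms by simp
  also have "\<dots> = card (SIGMA g : carrier G. {x \<in> carrier G. g \<otimes> x = x \<otimes> g})"
    using assms by simp
  also have "(SIGMA g : carrier G. {x \<in> carrier G. g \<otimes> x = x \<otimes> g}) = commuting_pairs G"
    unfolding commuting_pairs_def by auto
  finally show ?thesis ..
qed

lemma card_triples_rearranged:
  defines "N \<equiv> card (commuting_pairs G) * order G"
  shows "card {(x, y, z) \<in> carrier G \<times> carrier G \<times> carrier G. x \<otimes> y \<otimes> z = y \<otimes> x \<otimes> z} = N"
    and "card {(x, y, z) \<in> carrier G \<times> carrier G \<times> carrier G. x \<otimes> y \<otimes> z = x \<otimes> z \<otimes> y} = N"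
    and "card {(x, y, z) \<in> carrier G \<times> carrier G \<times> carrier G. x \<otimes> y \<otimes> z = z \<otimes> y \<otimes> x} = N"
    and "card {(x, y, z) \<in> carrier G \<times> carrier G \<times> carrier G. x \<otimes> y \<otimes> z = y \<otimes> z \<otimes> x} = N"
    and "card {(x, y, z) \<in> carrier G \<times> carrier G \<times> carrier G. x \<otimes> y \<otimes> z = z \<otimes> x \<otimes> y} = N"
proof -
  have N: "N = card (commuting_pairs G \<times> carrier G)"
    by (simp add: N_def card_cartesian_product order_def)
  show "card {(x, y, z) \<in> carrier G \<times> carrier G \<times> carrier G. x \<otimes> y \<otimes> z = y \<otimes> x \<otimes> z} = N"
    unfolding N
    by (rule bij_betw_same_card,
        rule bij_betw_byWitness[where f = "\<lambda>(x, y, z). ((x, y), z)"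
          and f' = "\<lambda>((x, y), z). (x, y, z)"])
      (auto simp: commuting_pairs_def)
  show "card {(x, y, z) \<in> carrier G \<times> carrier G \<times> carrier G. x \<otimes> y \<otimes> z = x \<otimes> z \<otimes> y} = N"
    unfolding N
    by (rule bij_betw_same_card,
        rule bij_betw_byWitness[where f = "\<lambda>(x, y, z). ((y, z), x)"
          and f' = "\<lambda>((y, z), x). (x, y, z)"])
      (auto simp: commuting_pairs_def m_assoc)
  show "card {(x, y, z) \<in> carrier G \<times> carrier G \<times> carrier G. x \<otimes> y \<otimes> z = z \<otimes> y \<otimes> x} = N"
    unfolding N
    by (rule bij_betw_same_card,
        rule bij_betw_byWitness[where f = "\<lambda>(x, y, z). ((x \<otimes> y, z \<otimes> inv x), x)"
          and f' = "\<lambda>((u, v), x). (x, inv x \<otimes> u, v \<otimes> x)"])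
      (auto simp: commuting_pairs_def m_assoc[symmetric] mult_r_inv_cancel mult_l_inv_cancel)
  show "card {(x, y, z) \<in> carrier G \<times> carrier G \<times> carrier G. x \<otimes> y \<otimes> z = y \<otimes> z \<otimes> x} = N"
    unfolding N
    by (rule bij_betw_same_card,
        rule bij_betw_byWitness[where f = "\<lambda>(x, y, z). ((x, y \<otimes> z), y)"
          and f' = "\<lambda>((x, u), y). (x, y, inv y \<otimes> u)"])
      (auto simp: commuting_pairs_def m_assoc[symmetric] mult_r_inv_cancel mult_l_inv_cancel)
  show "card {(x, y, z) \<in> carrier G \<times> carrier G \<times> carrier G. x \<otimes> y \<otimes> z = z \<otimes> x \<otimes> y} = N"
    unfolding N
    by (rule bij_betw_same_card,
        rule bij_betw_byWitness[where f = "\<lambda>(x, y, z). ((x \<otimes> y, z), x)"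
          and f' = "\<lambda>((u, z), x). (x, inv x \<otimes> u, z)"])
      (auto simp: commuting_pairs_def m_assoc[symmetric] mult_r_inv_cancel mult_l_inv_cancel)
qed

lemma card_word_solutions_cancel_first:
  assumes "i \<notin> I" "set xs \<subseteq> I" "set ys \<subseteq> I"
  shows "card (word_solutions G (insert i I) (i # xs) (i # ys)) = order G * card (word_solutions G I xs ys)"
  unfolding word_solutions_def order_def
proof (rule card_PiE_insert_filter[OF assms(1)])
  fix a assume a: "a \<in> insert i I \<rightarrow>\<^sub>E carrier G"
  have "a i \<in> carrier G" "word_prod G a xs \<in> carrier G" "word_prod G a ys \<in> carrier G"
    using a assms(2,3) by (auto intro: word_prod_closed)
  then show "word_prod G a (i # xs) = word_prod G a (i # ys) \<longleftrightarrow>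
      word_prod G (restrict a I) xs = word_prod G (restrict a I) ys"
    using assms(2,3) by (simp add: word_prod_restrict)
qed

lemma card_word_solutions_cancel_last:
  assumes "i \<notin> I" "set xs \<subseteq> I" "set ys \<subseteq> I"
  shows "card (word_solutions G (insert i I) (xs @ [i]) (ys @ [i])) = order G * card (word_solutions G I xs ys)"
  unfolding word_solutions_def order_def
proof (rule card_PiE_insert_filter[OF assms(1)])
  fix a assume a: "a \<in> insert i I \<rightarrow>\<^sub>E carrier G"
  have closed: "a i \<in> carrier G" "word_prod G a xs \<in> carrier G" "word_prod G a ys \<in> carrier G"
    using a assms(2,3) by (auto intro: word_prod_closed)
  have "word_prod G a (zs @ [i]) = word_prod G a zs \<otimes> a i" if "set zs \<subseteq> I" for zs
    using a that closed(1) by (subst word_prod_append) auto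
  then show "word_prod G a (xs @ [i]) = word_prod G a (ys @ [i]) \<longleftrightarrow>
      word_prod G (restrict a I) xs = word_prod G (restrict a I) ys"
    using assms(2,3) closed by (simp add: word_prod_restrict)
qed

lemma card_word_solutions_three_letters:
  assumes "distinct [i, j, k]" "distinct [p, q, r]" "{p, q, r} = {i, j, k}" "[p, q, r] \<noteq> [i, j, k]"
  shows "card (word_solutions G {i, j, k} [i, j, k] [p, q, r]) = card (commuting_pairs G) * order G"
proof -
  have solutions_eq: "word_solutions G {i, j, k} [i, j, k] [p, q, r] =
      {a \<in> {i, j, k} \<rightarrow>\<^sub>E carrier G. a i \<otimes> a j \<otimes> a k = a p \<otimes> a q \<otimes> a r}"
    unfolding word_solutions_def
  proof (intro Collect_cong conj_cong refl)
    fix a assume "a \<in> {i, j, k} \<rightarrow>\<^sub>E carrier G"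
    moreover have "p \<in> {i, j, k}" "q \<in> {i, j, k}" "r \<in> {i, j, k}"
      using assms(3) by auto
    ultimately have "a n \<in> carrier G" if "n \<in> {i, j, k, p, q, r}" for n
      using that by auto
    then show "word_prod G a [i, j, k] = word_prod G a [p, q, r] \<longleftrightarrow>
        a i \<otimes> a j \<otimes> a k = a p \<otimes> a q \<otimes> a r"
      by (simp add: m_assoc)
  qed
  let ?v = "\<lambda>x y z. restrict (\<lambda>n. if n = i then x else if n = j then y else z) {i, j, k}"
  have card_eq: "card (word_solutions G {i, j, k} [i, j, k] [p, q, r]) =
      card {(x, y, z) \<in> carrier G \<times> carrier G \<times> carrier G.
        ?v x y z i \<otimes> ?v x y z j \<otimes> ?v x y z k = ?v x y z p \<otimes> ?v x y z q \<otimes> ?v x y z r}"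
    unfolding solutions_eq by (rule card_PiE_triple[OF assms(1)])
  have "(p, q, r) \<in> {(j, i, k), (i, k, j), (k, j, i), (j, k, i), (k, i, j)}"
  proof -
    have "p \<in> {i, j, k}" "q \<in> {i, j, k}" "r \<in> {i, j, k}"
      using assms(3) by auto
    then show ?thesis
      using assms(1,2,4) by auto
  qed
  moreover have "i \<noteq> j" "j \<noteq> i" "i \<noteq> k" "k \<noteq> i" "j \<noteq> k" "k \<noteq> j"
    using assms(1) by auto
  ultimately show ?thesis
    unfolding card_eq by (elim insertE emptyE) (simp_all add: card_triples_rearranged[simplified])
qed

lemma card_word_solutions_four_letters:
  assumes "\<pi> permutes {1..4}" "\<pi> \<noteq> id" "\<pi> 1 = 1 \<or> \<pi> 4 = 4"
  shows "card (word_solutions G {1..4} [1, 2, 3, 4] (map \<pi> [1, 2, 3, 4])) =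
    order G * (card (commuting_pairs G) * order G)"
proof -
  have set4: "{1..4::nat} = {1, 2, 3, 4}"
    by auto
  from assms(3) show ?thesis
  proof
    assume fix1: "\<pi> 1 = 1"
    have "\<pi> permutes insert 1 {2, 3, 4}"
      using assms(1) set4 by simp
    note rearranged = permutes_fixing_point_rearranges[OF this fix1 _ assms(2)]
    have "card (word_solutions G (insert 1 {2, 3, 4}) (1 # [2, 3, 4]) (1 # map \<pi> [2, 3, 4])) =
        order G * card (word_solutions G {2, 3, 4} [2, 3, 4] (map \<pi> [2, 3, 4]))"
      using rearranged by (intro card_word_solutions_cancel_first) auto
    also have "\<dots> = order G * (card (commuting_pairs G) * order G)"
      using rearranged by (simp add: card_word_solutions_three_letters)
    finally show ?thesis
      using fix1 set4 by simp
  next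
    assume fix4: "\<pi> 4 = 4"
    have "\<pi> permutes insert 4 {1, 2, 3}"
      using assms(1) set4 by (simp add: insert_commute)
    note rearranged = permutes_fixing_point_rearranges[OF this fix4 _ assms(2)]
    have "card (word_solutions G (insert 4 {1, 2, 3}) ([1, 2, 3] @ [4]) (map \<pi> [1, 2, 3] @ [4])) =
        order G * card (word_solutions G {1, 2, 3} [1, 2, 3] (map \<pi> [1, 2, 3]))"
      using rearranged by (intro card_word_solutions_cancel_last) auto
    also have "\<dots> = order G * (card (commuting_pairs G) * order G)"
      using rearranged by (simp add: card_word_solutions_three_letters)
    finally show ?thesis
      using fix4 set4 by (simp add: insert_commute)
  qed
qed

end

theorem mainTheorem6:
  fixes G :: "('g, 'b) monoid_scheme" and \<pi> :: "nat \<Rightarrow> nat"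
  assumes "group G" and "finite (carrier G)"
    and "\<pi> permutes {1..4}" and "\<pi> \<noteq> id"
    and "\<pi> 1 = 1 \<or> \<pi> 4 = 4"
  shows "Pr_perm G 4 \<pi> = real (card (conj_classes G)) / real (order G)"
proof -
  interpret group G by fact
  have "[1..<4+1] = [1, 2, 3, 4::nat]"
    by (simp add: upt_rec)
  then have "Pr_perm G 4 \<pi> = real (order G * (card (commuting_pairs G) * order G)) / real (order G) ^ 4"
    using card_word_solutions_four_letters[OF assms(3-5)] by (simp add: Pr_perm_eq_card_word_solutions)
  also have "\<dots> = real (card (conj_classes G)) / real (order G)"
    using card_commuting_pairs[OF assms(2)] order_gt_0_iff_finite assms(2)
    by (simp add: power4_eq_xxxx)
  finally show ?thesis .
qed

end
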